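(* Let $n\in\mathbb{N}$. (1) If $n$ is odd and $n\geq 3$, then the path $P_n$ is an $\mathcal{N}$ position for Grim. (2) If $n$ is even and $n\geq 4$, then the cycle $C_n$ is a $\mathcal{P}$ position. (3) If $n$ is odd and $n\geq 5$, then the wheel $W_n$ is an $\mathcal{N}$ position. (4) For every non-empty finite simple graph $G$, the disjoint union $G\cup G$ of two copies of $G$ is a $\mathcal{P}$ position.
   Context: Grim is a two-player game on a finite simple undirected graph. Any isolated vertices of the starting graph are deleted before play begins. Players alternate moves; a move consists of selecting a vertex of the current graph and deleting it together with all its incident edges, after which every vertex that has become isolated is also deleted. The player who makes the last legal move wins (a player facing the empty graph has no move and loses). A graph is an $\mathcal{N}$ position if the player about to move has a winning strategy, and a $\mathcal{P}$ position otherwise. $P_n$, $C_n$ denote the path and cycle on $n$ vertices; $W_n$ denotes the wheel on $n$ vertices, i.e. the cycle $C_{n-1}$ together with one extra vertex (the center) adjacent to all vertices of the cycle. *)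

theory Defs
  imports Main
begin

text \<open>A Grim position is represented by its (finite) set of edges, each edge being a
  2-element vertex set. The vertices of the position are exactly the non-isolated
  vertices (the union of the edges), which matches the rule that isolated vertices are
  deleted.\<close>

definition grim_delete :: "'a \<Rightarrow> 'a set set \<Rightarrow> 'a set set" where
  "grim_delete v E = {e \<in> E. v \<notin> e}"

lemma grim_delete_card_less:
  assumes "finite E" "v \<in> \<Union>E"
  shows "card (grim_delete v E) < card E"
proof -
  from assms(2) obtain e where "e \<in> E" "v \<in> e" by blast
  hence "grim_delete v E \<subset> E" unfolding grim_delete_def by blast
  thus ?thesis using assms(1) by (simp add: psubset_card_mono)
qed

function grim_N :: "'a set set \<Rightarrow> bool" where
  "grim_N E = (if finite E then (\<exists>v\<in>\<Union>E. \<not> grim_N (grim_delete v E)) else False)"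
  by auto
termination
  by (relation "measure card") (auto intro: grim_delete_card_less)

declare grim_N.simps[simp del]

definition grim_P :: "'a set set \<Rightarrow> bool" where
  "grim_P E = (\<not> grim_N E)"

definition finite_simple_graph :: "'a set \<Rightarrow> 'a set set \<Rightarrow> bool" where
  "finite_simple_graph V E \<longleftrightarrow> finite V \<and> (\<forall>e\<in>E. e \<subseteq> V \<and> card e = 2)"

text \<open>Path P_n on vertices 0..n-1, cycle C_n on vertices 0..n-1 (n \<ge> 3),
  wheel W_n: cycle C_{n-1} on 0..n-2 and center n-1.\<close>
definition path_edges :: "nat \<Rightarrow> nat set set" where
  "path_edges n = {{i, Suc i} | i. Suc i < n}"

definition cycle_edges :: "nat \<Rightarrow> nat set set" where
  "cycle_edges n = {{i, (Suc i) mod n} | i. i < n}"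

definition wheel_edges :: "nat \<Rightarrow> nat set set" where
  "wheel_edges n = cycle_edges (n - 1) \<union> {{i, n - 1} | i. i < n - 1}"

definition double_edges :: "'a set set \<Rightarrow> ('a + 'a) set set" where
  "double_edges E = (\<lambda>e. Inl ` e) ` E \<union> (\<lambda>e. Inr ` e) ` E"

end

theory Submission
  imports Defs
begin

text \<open>The second player wins on two disjoint copies of a graph by answering every move with
  the same move in the other copy, so that the position is again two copies of one graph.
  Deleting the middle vertex of \<open>P\<^sub>2\<^sub>m\<^sub>+\<^sub>1\<close> leaves two copies of \<open>P\<^sub>m\<close>, a winning move.
  All vertices of \<open>C\<^sub>n\<close> are equivalent under rotation and deleting any of them leaves
  \<open>P\<^sub>n\<^sub>-\<^sub>1\<close>, which is an \<open>\<N>\<close> position for even \<open>n\<close>; hence \<open>C\<^sub>n\<close> is a \<open>\<P>\<close> position.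
  Finally, deleting the centre of \<open>W\<^sub>n\<close> leaves the \<open>\<P>\<close> position \<open>C\<^sub>n\<^sub>-\<^sub>1\<close>.\<close>

lemma grim_N_iff:
  "finite E \<Longrightarrow> grim_N E \<longleftrightarrow> (\<exists>v\<in>\<Union>E. grim_P (grim_delete v E))"
  unfolding grim_P_def by (subst grim_N.simps) simp

lemma grim_P_iff:
  "finite E \<Longrightarrow> grim_P E \<longleftrightarrow> (\<forall>v\<in>\<Union>E. grim_N (grim_delete v E))"
  using grim_N_iff[of E] unfolding grim_P_def by blast

lemma grim_N_intro:
  "finite E \<Longrightarrow> v \<in> \<Union>E \<Longrightarrow> grim_P (grim_delete v E) \<Longrightarrow> grim_N E"
  using grim_N_iff by blast

lemma finite_grim_delete: "finite E \<Longrightarrow> finite (grim_delete v E)"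
  by (simp add: grim_delete_def)

lemma grim_delete_image:
  assumes "inj_on f (\<Union>E)" "v \<in> \<Union>E"
  shows "grim_delete (f v) ((`) f ` E) = (`) f ` grim_delete v E"
proof -
  have "f v \<in> f ` e \<longleftrightarrow> v \<in> e" if "e \<in> E" for e
    using assms that by (meson Sup_upper inj_on_image_mem_iff)
  then show ?thesis
    unfolding grim_delete_def by auto
qed

lemma grim_N_image:
  "finite E \<Longrightarrow> inj_on f (\<Union>E) \<Longrightarrow> grim_N ((`) f ` E) \<longleftrightarrow> grim_N E"
proof (induction "card E" arbitrary: E rule: less_induct)
  case less
  have "grim_P (grim_delete (f v) ((`) f ` E)) \<longleftrightarrow> grim_P (grim_delete v E)"
    if v: "v \<in> \<Union>E" for v
  proof -
    have "inj_on f (\<Union>(grim_delete v E))"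
      using less.prems(2) by (rule inj_on_subset) (auto simp: grim_delete_def)
    then have "grim_N ((`) f ` grim_delete v E) \<longleftrightarrow> grim_N (grim_delete v E)"
      by (rule less.hyps[OF grim_delete_card_less[OF less.prems(1) v] finite_grim_delete[OF less.prems(1)]])
    then show ?thesis
      using grim_delete_image[OF less.prems(2) v] by (simp add: grim_P_def)
  qed
  moreover have "\<Union>((`) f ` E) = f ` \<Union>E"
    by auto
  ultimately show ?case
    using less.prems(1) by (simp add: grim_N_iff)
qed

lemma grim_N_delete_automorphism:
  assumes "finite E" "inj_on f (\<Union>E)" "(`) f ` E = E" "v \<in> \<Union>E"
  shows "grim_N (grim_delete (f v) E) \<longleftrightarrow> grim_N (grim_delete v E)"
proof -
  have "inj_on f (\<Union>(grim_delete v E))"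
    using assms(2) by (rule inj_on_subset) (auto simp: grim_delete_def)
  then have "grim_N ((`) f ` grim_delete v E) \<longleftrightarrow> grim_N (grim_delete v E)"
    by (rule grim_N_image[OF finite_grim_delete[OF assms(1)]])
  then show ?thesis
    using grim_delete_image[OF assms(2,4)] assms(3) by simp
qed

lemma Union_double_edges: "\<Union>(double_edges E) = Inl ` \<Union>E \<union> Inr ` \<Union>E"
  by (auto simp: double_edges_def)

lemma image_double_edges:
  "(`) (case_sum f g) ` double_edges E = (`) f ` E \<union> (`) g ` E"
  unfolding double_edges_def image_Un image_image by (simp add: image_image)

lemma double_edges_mirror_reply:
  assumes "u \<in> \<Union>E" "w \<in> {Inl u, Inr u}"
  obtains w' where "w' \<in> \<Union>(grim_delete w (double_edges E))"
    and "grim_delete w' (grim_delete w (double_edges E)) = double_edges (grim_delete u E)"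
proof -
  have "grim_delete (Inr u) (grim_delete (Inl u) (double_edges E)) = double_edges (grim_delete u E)"
    and "grim_delete (Inl u) (grim_delete (Inr u) (double_edges E)) = double_edges (grim_delete u E)"
    by (auto simp: grim_delete_def double_edges_def)
  moreover have "Inr u \<in> \<Union>(grim_delete (Inl u) (double_edges E))"
    and "Inl u \<in> \<Union>(grim_delete (Inr u) (double_edges E))"
    using assms(1) by (auto simp: grim_delete_def double_edges_def)
  ultimately show ?thesis
    using assms(2) that by blast
qed

lemma grim_P_double_edges: "finite E \<Longrightarrow> grim_P (double_edges E)"
proof (induction "card E" arbitrary: E rule: less_induct)
  case less
  have finite_double: "finite (double_edges E)"
    by (simp add: double_edges_def less.prems)
  have "grim_N (grim_delete w (double_edges E))" if "w \<in> \<Union>(double_edges E)" for w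
  proof -
    from that have "w \<in> Inl ` \<Union>E \<union> Inr ` \<Union>E"
      by (simp add: Union_double_edges)
    then obtain u where u: "u \<in> \<Union>E" and w: "w \<in> {Inl u, Inr u}"
      by blast
    obtain w' where w': "w' \<in> \<Union>(grim_delete w (double_edges E))"
      and reply: "grim_delete w' (grim_delete w (double_edges E)) = double_edges (grim_delete u E)"
      using double_edges_mirror_reply[OF u w] .
    have "grim_P (double_edges (grim_delete u E))"
      by (rule less.hyps[OF grim_delete_card_less[OF less.prems u] finite_grim_delete[OF less.prems]])
    then show ?thesis
      using grim_N_intro[OF finite_grim_delete[OF finite_double] w'] reply by simp
  qed
  then show ?case
    using grim_P_iff[OF finite_double] by blast
qed

lemma finite_simple_graph_finite_edges: "finite_simple_graph V E \<Longrightarrow> finite E"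
  unfolding finite_simple_graph_def by (meson Pow_iff finite_Pow_iff finite_subset subsetI)

lemma path_edgesI: "Suc i < n \<Longrightarrow> {i, Suc i} \<in> path_edges n"
  by (auto simp: path_edges_def)

lemma finite_path_edges: "finite (path_edges n)"
proof -
  have "path_edges n = (\<lambda>i. {i, Suc i}) ` {..<n - 1}"
    by (auto simp: path_edges_def)
  then show ?thesis
    by simp
qed

lemma Union_path_edges_subset: "\<Union>(path_edges n) \<subseteq> {..<n}"
  by (auto simp: path_edges_def)

lemma grim_delete_path_edges_middle:
  "grim_delete m (path_edges (2 * m + 1)) = path_edges m \<union> (`) ((+) (Suc m)) ` path_edges m"
proof (rule set_eqI, rule iffI)
  fix x
  assume "x \<in> grim_delete m (path_edges (2 * m + 1))"
  then obtain i where x: "x = {i, Suc i}" "Suc i < 2 * m + 1" "i \<noteq> m" "Suc i \<noteq> m"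
    by (auto simp: grim_delete_def path_edges_def)
  show "x \<in> path_edges m \<union> (`) ((+) (Suc m)) ` path_edges m"
  proof (cases "i < m")
    case True
    with x show ?thesis
      by (auto intro: path_edgesI)
  next
    case False
    with x have "x = (+) (Suc m) ` {i - Suc m, Suc (i - Suc m)}" "Suc (i - Suc m) < m"
      by auto
    then show ?thesis
      by (blast intro: path_edgesI)
  qed
qed (auto simp: grim_delete_def path_edges_def)

lemma grim_N_path_edges_odd:
  assumes "odd n" "n \<ge> 3"
  shows "grim_N (path_edges n)"
proof -
  obtain m where n: "n = 2 * m + 1"
    using assms(1) oddE by blast
  let ?f = "case_sum id ((+) (Suc m))"
  have "inj_on ?f (Inl ` {..<m} \<union> range Inr)"
    by (rule inj_onI) (auto split: sum.splits)
  moreover have "\<Union>(double_edges (path_edges m)) \<subseteq> Inl ` {..<m} \<union> range Inr"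
    using Union_path_edges_subset by (auto simp: Union_double_edges)
  ultimately have "inj_on ?f (\<Union>(double_edges (path_edges m)))"
    by (rule inj_on_subset)
  moreover have "finite (double_edges (path_edges m))"
    by (simp add: double_edges_def finite_path_edges)
  ultimately have "grim_N ((`) ?f ` double_edges (path_edges m)) \<longleftrightarrow> grim_N (double_edges (path_edges m))"
    by (intro grim_N_image)
  then have "grim_P ((`) ?f ` double_edges (path_edges m))"
    using grim_P_double_edges[OF finite_path_edges] by (simp add: grim_P_def)
  moreover have "(`) ?f ` double_edges (path_edges m) = grim_delete m (path_edges n)"
    unfolding image_double_edges grim_delete_path_edges_middle n by simp
  moreover have "m \<in> \<Union>(path_edges n)"
    using path_edgesI[of m n] n assms(2) by auto
  ultimately show ?thesis
    using grim_N_intro[OF finite_path_edges] by simp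
qed

lemma finite_cycle_edges: "finite (cycle_edges n)"
proof -
  have "cycle_edges n = (\<lambda>i. {i, Suc i mod n}) ` {..<n}"
    by (auto simp: cycle_edges_def)
  then show ?thesis
    by simp
qed

lemma cycle_edgesI: "i < n \<Longrightarrow> {i, Suc i mod n} \<in> cycle_edges n"
  unfolding cycle_edges_def by blast

lemma Union_cycle_edges: "0 < n \<Longrightarrow> \<Union>(cycle_edges n) = {..<n}"
  by (auto simp: cycle_edges_def)

lemma cycle_edges_rotate:
  assumes "0 < n"
  shows "(`) (\<lambda>i. Suc i mod n) ` cycle_edges n = cycle_edges n"
proof (rule set_eqI, rule iffI)
  fix x
  assume "x \<in> (`) (\<lambda>i. Suc i mod n) ` cycle_edges n"
  then obtain i where "i < n" "x = {Suc i mod n, Suc (Suc i mod n) mod n}"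
    by (auto simp: cycle_edges_def)
  then show "x \<in> cycle_edges n"
    using assms by (simp add: cycle_edgesI)
next
  fix x
  assume "x \<in> cycle_edges n"
  then obtain j where j: "j < n" "x = {j, Suc j mod n}"
    by (auto simp: cycle_edges_def)
  define i where "i = (if j = 0 then n - 1 else j - 1)"
  have "i < n"
    using assms j(1) unfolding i_def by auto
  then have "{i, Suc i mod n} \<in> cycle_edges n"
    by (rule cycle_edgesI)
  moreover have "x = (\<lambda>i. Suc i mod n) ` {i, Suc i mod n}"
    using assms j by (auto simp: i_def)
  ultimately show "x \<in> (`) (\<lambda>i. Suc i mod n) ` cycle_edges n"
    by blast
qed

lemma grim_N_delete_cycle_edges:
  "v < n \<Longrightarrow> grim_N (grim_delete v (cycle_edges n)) \<longleftrightarrow> grim_N (grim_delete 0 (cycle_edges n))"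
proof (induction v)
  case (Suc v)
  let ?r = "\<lambda>i. Suc i mod n"
  have "inj_on ?r {..<n}"
    by (rule inj_onI) (auto simp: mod_Suc split: if_splits)
  moreover have "0 < n" "\<Union>(cycle_edges n) = {..<n}"
    using Suc.prems Union_cycle_edges by auto
  ultimately have "grim_N (grim_delete (?r v) (cycle_edges n)) \<longleftrightarrow> grim_N (grim_delete v (cycle_edges n))"
    using Suc.prems by (intro grim_N_delete_automorphism finite_cycle_edges cycle_edges_rotate) simp_all
  moreover have "?r v = Suc v"
    using Suc.prems by simp
  ultimately show ?case
    using Suc by simp
qed simp

lemma grim_delete_cycle_edges_0:
  assumes "n \<ge> 3"
  shows "grim_delete 0 (cycle_edges n) = (`) Suc ` path_edges (n - 1)"
proof (rule set_eqI, rule iffI)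
  fix x
  assume x: "x \<in> grim_delete 0 (cycle_edges n)"
  then obtain j where j: "j < n" "x = {j, Suc j mod n}"
    by (auto simp: grim_delete_def cycle_edges_def)
  have zero: "0 \<notin> x"
    using x by (simp add: grim_delete_def)
  with j have "Suc j < n"
    by (metis Suc_leI insertCI le_neq_implies_less mod_self)
  moreover obtain i where "j = Suc i"
    using j zero by (cases j) auto
  ultimately have "x = Suc ` {i, Suc i}" "Suc i < n - 1"
    using j by auto
  then show "x \<in> (`) Suc ` path_edges (n - 1)"
    by (blast intro: path_edgesI)
next
  fix x
  assume "x \<in> (`) Suc ` path_edges (n - 1)"
  then obtain i where "Suc i < n - 1" "x = {Suc i, Suc (Suc i) mod n}"
    by (auto simp: path_edges_def)
  then show "x \<in> grim_delete 0 (cycle_edges n)"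
    by (auto simp: grim_delete_def cycle_edges_def)
qed

lemma grim_P_cycle_edges_even:
  assumes "even n" "n \<ge> 4"
  shows "grim_P (cycle_edges n)"
proof -
  have "grim_N ((`) Suc ` path_edges (n - 1))"
    using grim_N_path_edges_odd[of "n - 1"] assms grim_N_image[OF finite_path_edges, of Suc]
    by simp
  then have "grim_N (grim_delete 0 (cycle_edges n))"
    using grim_delete_cycle_edges_0 assms(2) by simp
  then have "grim_N (grim_delete v (cycle_edges n))" if "v < n" for v
    using grim_N_delete_cycle_edges[OF that] by blast
  then show ?thesis
    using grim_P_iff[OF finite_cycle_edges] Union_cycle_edges[of n] assms(2) by auto
qed

lemma finite_wheel_edges: "finite (wheel_edges n)"
proof -
  have "{{i, n - 1} | i. i < n - 1} = (\<lambda>i. {i, n - 1}) ` {..<n - 1}"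
    by auto
  then show ?thesis
    by (simp add: wheel_edges_def finite_cycle_edges)
qed

lemma grim_delete_wheel_edges_centre:
  assumes "n \<ge> 2"
  shows "grim_delete (n - 1) (wheel_edges n) = cycle_edges (n - 1)"
proof -
  have "\<Union>(cycle_edges (n - 1)) = {..<n - 1}"
    using assms by (intro Union_cycle_edges) simp
  then have "n - 1 \<notin> e" if "e \<in> cycle_edges (n - 1)" for e
    using that by (metis UnionI lessThan_iff less_irrefl)
  then show ?thesis
    unfolding wheel_edges_def grim_delete_def by blast
qed

lemma grim_N_wheel_edges_odd:
  assumes "odd n" "n \<ge> 5"
  shows "grim_N (wheel_edges n)"
proof (rule grim_N_intro[OF finite_wheel_edges])
  have "{0, n - 1} \<in> wheel_edges n"
    using assms unfolding wheel_edges_def by auto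
  then show "n - 1 \<in> \<Union>(wheel_edges n)"
    by blast
  show "grim_P (grim_delete (n - 1) (wheel_edges n))"
    using grim_P_cycle_edges_even[of "n - 1"] grim_delete_wheel_edges_centre assms by simp
qed

theorem corollary4p4:
  shows "(\<forall>n::nat. odd n \<and> n \<ge> 3 \<longrightarrow> grim_N (path_edges n))
    \<and> (\<forall>n::nat. even n \<and> n \<ge> 4 \<longrightarrow> grim_P (cycle_edges n))
    \<and> (\<forall>n::nat. odd n \<and> n \<ge> 5 \<longrightarrow> grim_N (wheel_edges n))
    \<and> (\<forall>(V::'a set) E. finite_simple_graph V E \<and> V \<noteq> {} \<longrightarrow> grim_P (double_edges E))"
  using grim_N_path_edges_odd grim_P_cycle_edges_even grim_N_wheel_edges_odd
    grim_P_double_edges finite_simple_graph_finite_edges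
  by blast

end
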